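(* The hypergraph $K_{15}^{(3)}-I$ admits a decomposition into $50$ tight $9$-cycles.
   Context: $K_v^{(3)}$ denotes the complete $3$-uniform hypergraph on $v$ vertices. For $3\mid v$, $K_v^{(3)}-I$ is obtained from $K_v^{(3)}$ by deleting the edges of a $1$-factor $I$ (a set of $v/3$ pairwise disjoint triples covering all vertices). A (3-uniform tight) $k$-cycle is given by a cyclic sequence $v_1,\dots,v_k$ of $k$ distinct vertices, its edges being the triples $\{v_i,v_{i+1},v_{i+2}\}$ ($i=1,\dots,k$, indices mod $k$). A decomposition is a collection of cycles whose edge sets partition the edge set. *)

theory Defs
  imports Main
begin

definition complete3 :: "'a set \<Rightarrow> 'a set set" where
  "complete3 V = {e. e \<subseteq> V \<and> card e = 3}"

definition one_factor :: "'a set \<Rightarrow> 'a set set \<Rightarrow> bool" where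
  "one_factor V I \<longleftrightarrow> I \<subseteq> complete3 V \<and> \<Union> I = V \<and>
     (\<forall>e\<in>I. \<forall>f\<in>I. e \<noteq> f \<longrightarrow> e \<inter> f = {})"

(* tight 3-uniform k-cycle given by the cyclic vertex sequence c of length k *)
definition is_tight_cycle :: "nat \<Rightarrow> 'a list \<Rightarrow> bool" where
  "is_tight_cycle k c \<longleftrightarrow> length c = k \<and> distinct c"

definition cycle_edges :: "'a list \<Rightarrow> 'a set set" where
  "cycle_edges c = {{c ! i, c ! ((i + 1) mod length c), c ! ((i + 2) mod length c)} | i. i < length c}"

definition tight_cycle_decomposition :: "nat \<Rightarrow> 'a set set \<Rightarrow> 'a list list \<Rightarrow> bool" where
  "tight_cycle_decomposition k E D \<longleftrightarrow>
     (\<forall>c\<in>set D. is_tight_cycle k c) \<and>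
     (\<forall>i<length D. \<forall>j<length D. i \<noteq> j \<longrightarrow> cycle_edges (D ! i) \<inter> cycle_edges (D ! j) = {}) \<and>
     (\<Union>c\<in>set D. cycle_edges c) = E"

end

theory Submission
  imports Defs
begin

(*
  Any two 1-factors of K_15^(3) differ by a relabelling of the vertices, and relabelling
  carries tight cycle decompositions to tight cycle decompositions.  So it suffices to give
  one decomposition of K_15^(3) minus the factor {0,1,2}, ..., {12,13,14}, which is the
  explicit list of 50 cycles below.  Coding a triple e as the number sum_{x in e} 2^x turns
  "the 5 factor edges and the 450 cycle edges are pairwise different" into a finite check on
  numbers, and since 5 + 450 = 455 = (15 choose 3) these edges are then all triples.
*)

definition cycle_edge_list :: "'a list \<Rightarrow> 'a set list" where
  "cycle_edge_list c =
     map (\<lambda>i. {c ! i, c ! ((i + 1) mod length c), c ! ((i + 2) mod length c)}) [0..<length c]"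

lemma set_cycle_edge_list: "set (cycle_edge_list c) = cycle_edges c"
  unfolding cycle_edges_def cycle_edge_list_def by auto

lemma cycle_edge_list_map: "cycle_edge_list (map g c) = map (image g) (cycle_edge_list c)"
proof (cases "c = []")
  case False
  then show ?thesis
    unfolding cycle_edge_list_def by (auto intro!: map_cong)
qed (simp add: cycle_edge_list_def)

lemma length_cycle_edge_list [simp]: "length (cycle_edge_list c) = length c"
  by (simp add: cycle_edge_list_def)

lemma cycle_edges_map: "cycle_edges (map g c) = image g ` cycle_edges c"
  by (simp flip: set_cycle_edge_list add: cycle_edge_list_map)

lemma consecutive_mod_distinct:
  fixes i n :: nat
  assumes "i < n" "3 \<le> n"
  shows "i \<noteq> (i + 1) mod n" "i \<noteq> (i + 2) mod n" "(i + 1) mod n \<noteq> (i + 2) mod n"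
proof -
  show "i \<noteq> (i + 1) mod n"
    using assms by (cases "i + 1 = n") auto
  show "i \<noteq> (i + 2) mod n" "(i + 1) mod n \<noteq> (i + 2) mod n"
    using assms by (cases "i + 2 < n"; cases "i + 2 = n"; auto simp: mod_if)+
qed

lemma cycle_edge_nth_distinct:
  assumes "distinct c" "i < length c" "3 \<le> length c"
  shows "c ! i \<noteq> c ! ((i + 1) mod length c)" "c ! i \<noteq> c ! ((i + 2) mod length c)"
    "c ! ((i + 1) mod length c) \<noteq> c ! ((i + 2) mod length c)"
proof -
  have "(i + 1) mod length c < length c" "(i + 2) mod length c < length c"
    using assms(2) by (auto intro!: mod_less_divisor)
  then show "c ! i \<noteq> c ! ((i + 1) mod length c)" "c ! i \<noteq> c ! ((i + 2) mod length c)"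
    "c ! ((i + 1) mod length c) \<noteq> c ! ((i + 2) mod length c)"
    using consecutive_mod_distinct[OF assms(2,3)] assms(2) nth_eq_iff_index_eq[OF assms(1)] by metis+
qed

lemma cycle_edge_in_complete3:
  assumes "distinct c" "3 \<le> length c" "set c \<subseteq> V" "e \<in> cycle_edges c"
  shows "e \<in> complete3 V"
proof -
  obtain i where i: "i < length c"
    and e: "e = {c ! i, c ! ((i + 1) mod length c), c ! ((i + 2) mod length c)}"
    using assms(4) unfolding cycle_edges_def by auto
  have "card e = 3"
    using cycle_edge_nth_distinct[OF assms(1) i assms(2)] e by simp
  moreover have "e \<subseteq> set c"
    using i e by (cases "c = []") (auto intro!: nth_mem)
  ultimately show ?thesis
    using assms(3) unfolding complete3_def by auto
qed

lemma cycle_edges_subset_Pow: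
  assumes "set c \<subseteq> V" shows "cycle_edges c \<subseteq> Pow V"
  using assms unfolding cycle_edges_def by (cases "c = []") (auto intro!: nth_mem)

lemma disjoint_nth_if_distinct_concat:
  assumes "distinct (concat xss)" "[] \<notin> set xss"
    and "i < length xss" "j < length xss" "i \<noteq> j"
  shows "set (xss ! i) \<inter> set (xss ! j) = {}"
proof -
  have "distinct xss" "\<forall>ys\<in>set xss. \<forall>zs\<in>set xss. ys \<noteq> zs \<longrightarrow> set ys \<inter> set zs = {}"
    using assms(1,2) by (auto simp: distinct_concat_iff removeAll_id)
  then show ?thesis
    using assms(3-5) by (simp add: nth_eq_iff_index_eq)
qed

lemma tight_cycle_decomposition_if_distinct_edges:
  assumes cycles: "\<forall>c\<in>set D. is_tight_cycle k c" and "3 \<le> k"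
    and "distinct (concat (map cycle_edge_list D))"
    and "set (concat (map cycle_edge_list D)) = E"
  shows "tight_cycle_decomposition k E D"
  unfolding tight_cycle_decomposition_def
proof (intro conjI allI impI)
  have "[] \<notin> set (map cycle_edge_list D)"
    using cycles \<open>3 \<le> k\<close> by (auto simp: cycle_edge_list_def is_tight_cycle_def)
  then show "cycle_edges (D ! i) \<inter> cycle_edges (D ! j) = {}"
    if "i < length D" "j < length D" "i \<noteq> j" for i j
    using disjoint_nth_if_distinct_concat[OF assms(3)] that
    by (simp add: set_cycle_edge_list)
  show "(\<Union>c\<in>set D. cycle_edges c) = E"
    using assms(4) by (simp flip: set_cycle_edge_list)
qed (use cycles in simp)

lemma tight_cycle_decomposition_image:
  assumes inj: "inj_on g V" and vertices: "\<forall>c\<in>set D. set c \<subseteq> V"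
    and dec: "tight_cycle_decomposition k E D"
  shows "tight_cycle_decomposition k (image g ` E) (map (map g) D)"
  unfolding tight_cycle_decomposition_def
proof (intro conjI allI impI ballI)
  fix c' assume "c' \<in> set (map (map g) D)"
  then obtain c where c: "c \<in> set D" "c' = map g c" by auto
  moreover have "inj_on g (set c)"
    using inj vertices c(1) by (auto intro: inj_on_subset)
  ultimately show "is_tight_cycle k c'"
    using dec by (auto simp: tight_cycle_decomposition_def is_tight_cycle_def distinct_map)
next
  fix i j assume ij: "i < length (map (map g) D)" "j < length (map (map g) D)" "i \<noteq> j"
  have "cycle_edges (D ! i) \<subseteq> Pow V" "cycle_edges (D ! j) \<subseteq> Pow V"
    using vertices ij by (auto intro!: cycle_edges_subset_Pow)
  then have "image g ` (cycle_edges (D ! i) \<inter> cycle_edges (D ! j))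
      = image g ` cycle_edges (D ! i) \<inter> image g ` cycle_edges (D ! j)"
    by (intro inj_on_image_Int[OF inj_on_image_Pow[OF inj]])
  moreover have "cycle_edges (D ! i) \<inter> cycle_edges (D ! j) = {}"
    using dec ij unfolding tight_cycle_decomposition_def by auto
  ultimately show "cycle_edges (map (map g) D ! i) \<inter> cycle_edges (map (map g) D ! j) = {}"
    using ij by (simp add: cycle_edges_map)
next
  show "(\<Union>c\<in>set (map (map g) D). cycle_edges c) = image g ` E"
    using dec by (auto simp: tight_cycle_decomposition_def cycle_edges_map)
qed

lemma complete3_image_bij:
  assumes "bij_betw g V V" shows "image g ` complete3 V = complete3 V"
proof -
  have card_image_subset: "card (g ` e) = card e" if "e \<subseteq> V" for e
    using assms that unfolding bij_betw_def by (metis card_image inj_on_subset)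
  have surj: "image g ` Pow V = Pow V"
    using bij_betw_imp_surj_on[OF bij_betw_image_Pow[OF assms]] .
  have "x \<in> image g ` complete3 V \<longleftrightarrow> x \<in> complete3 V" for x
  proof -
    have "x \<in> image g ` complete3 V \<longleftrightarrow> (\<exists>e\<in>Pow V. x = g ` e \<and> card e = 3)"
      by (auto simp: complete3_def)
    also have "\<dots> \<longleftrightarrow> (\<exists>e\<in>Pow V. x = g ` e) \<and> card x = 3"
      using card_image_subset by (metis PowD)
    also have "\<dots> \<longleftrightarrow> x \<in> complete3 V"
      using surj unfolding complete3_def by blast
    finally show ?thesis .
  qed
  then show ?thesis
    by blast
qed

lemma image_complete3_diff:
  assumes "bij_betw g V V" "F \<subseteq> Pow V"
  shows "image g ` (complete3 V - F) = complete3 V - image g ` F"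
proof -
  have "image g ` (complete3 V - F) = image g ` complete3 V - image g ` F"
    using assms by (intro inj_on_image_set_diff[OF inj_on_image_Pow])
      (auto simp: bij_betw_def complete3_def)
  then show ?thesis
    using complete3_image_bij[OF assms(1)] by simp
qed

lemma card_complete3: "finite V \<Longrightarrow> card (complete3 V) = card V choose 3"
  unfolding complete3_def by (rule n_subsets)

lemma set_eq_complete3_if_distinct:
  assumes "finite V" "distinct L" "set L \<subseteq> complete3 V" "length L = card V choose 3"
  shows "set L = complete3 V"
proof (rule card_seteq)
  show "finite (complete3 V)"
    using assms(1) by (auto simp: complete3_def intro: finite_subset[of _ "Pow V"])
  show "card (complete3 V) \<le> card (set L)"
    using assms by (simp add: card_complete3 distinct_card)
qed (fact assms(3))

definition standard_factor :: "nat \<Rightarrow> nat set set" where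
  "standard_factor n = (\<lambda>i. {3 * i, 3 * i + 1, 3 * i + 2}) ` {..<n}"

lemma Union_standard_factor: "\<Union> (standard_factor n) = {0..<3 * n}"
proof
  show "{0..<3 * n} \<subseteq> \<Union> (standard_factor n)"
  proof
    fix x assume "x \<in> {0..<3 * n}"
    then have "x div 3 < n" "x \<in> {3 * (x div 3), 3 * (x div 3) + 1, 3 * (x div 3) + 2}"
      by auto
    then show "x \<in> \<Union> (standard_factor n)"
      unfolding standard_factor_def by blast
  qed
qed (auto simp: standard_factor_def)

lemma card_one_factor:
  assumes "one_factor V I" "finite V"
  shows "card V = 3 * card I"
proof -
  have I: "I \<subseteq> complete3 V" "\<Union> I = V" "pairwise disjnt I"
    using assms(1) unfolding one_factor_def pairwise_def disjnt_def by auto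
  have "card (\<Union> I) = (\<Sum>e\<in>I. card e)"
    using I assms(2) by (intro card_Union_disjoint) (auto simp: complete3_def intro: finite_subset)
  also have "\<dots> = 3 * card I"
    using I(1) by (simp add: complete3_def subset_iff)
  finally show ?thesis
    using I(2) by simp
qed

lemma one_factor_eq_image_standard_factor:
  assumes "one_factor {0..<3 * n} I"
  obtains g where "bij_betw g {0..<3 * n} {0..<3 * n}" "image g ` standard_factor n = I"
proof -
  let ?V = "{0..<3 * n}"
  have I: "I \<subseteq> complete3 ?V" "\<Union> I = ?V"
    using assms unfolding one_factor_def by auto
  have "finite I"
    using I(1) by (auto simp: complete3_def intro: finite_subset[of _ "Pow ?V"])
  then obtain Bs where Bs: "set Bs = I" "distinct Bs"
    using finite_distinct_list by blast
  have "length Bs = n"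
    using card_one_factor[OF assms] distinct_card[OF Bs(2)] Bs(1) by simp
  \<comment> \<open>g maps the i-th standard block onto the i-th block of I; being onto a set of the same
    size, it is then injective.\<close>
  define g where "g x = sorted_list_of_set (Bs ! (x div 3)) ! (x mod 3)" for x
  have block: "g ` {3 * i, 3 * i + 1, 3 * i + 2} = Bs ! i" if "i < n" for i
  proof -
    define s where "s = sorted_list_of_set (Bs ! i)"
    have "Bs ! i \<in> complete3 ?V"
      using Bs I(1) that \<open>length Bs = n\<close> by (auto intro: nth_mem)
    then have "finite (Bs ! i)" "card (Bs ! i) = 3"
      by (auto simp: complete3_def intro: finite_subset)
    then have "set s = Bs ! i" "length s = 3"
      by (simp_all add: s_def)
    moreover obtain a b c where "s = [a, b, c]"
      using \<open>length s = 3\<close> by (auto simp: numeral_eq_Suc length_Suc_conv)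
    moreover have nth_s: "g (3 * i + r) = s ! r" if "r < 3" for r
      using that by (simp add: g_def s_def)
    ultimately show ?thesis
      using nth_s[of 0] nth_s[of 1] nth_s[of 2] by simp
  qed
  have img: "image g ` standard_factor n = I"
    unfolding standard_factor_def image_image using block Bs \<open>length Bs = n\<close>
    by (auto simp: in_set_conv_nth)
  have surj: "g ` ?V = ?V"
    using img I(2) by (simp flip: Union_standard_factor add: image_Union)
  then have "inj_on g ?V"
    by (intro eq_card_imp_inj_on) auto
  with surj img show thesis
    by (intro that) (simp_all add: bij_betw_def)
qed

definition edge_code :: "nat set \<Rightarrow> nat" where
  "edge_code e = (\<Sum>x\<in>e. 2 ^ x)"

definition cycle_codes :: "nat list \<Rightarrow> nat list" where
  "cycle_codes c = map (\<lambda>i. 2 ^ (c ! i) + 2 ^ (c ! ((i + 1) mod length c))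
     + 2 ^ (c ! ((i + 2) mod length c))) [0..<length c]"

lemma edge_code_triple:
  "a \<noteq> b \<Longrightarrow> a \<noteq> c \<Longrightarrow> b \<noteq> c \<Longrightarrow> edge_code {a, b, c} = 2 ^ a + 2 ^ b + 2 ^ c"
  by (simp add: edge_code_def)

lemma edge_code_cycle_edge_list:
  assumes "distinct c" "3 \<le> length c"
  shows "map edge_code (cycle_edge_list c) = cycle_codes c"
proof -
  have edge_code_nth: "edge_code {c ! i, c ! ((i + 1) mod length c), c ! ((i + 2) mod length c)}
      = 2 ^ (c ! i) + 2 ^ (c ! ((i + 1) mod length c)) + 2 ^ (c ! ((i + 2) mod length c))"
    if "i < length c" for i
    using cycle_edge_nth_distinct[OF assms(1) that assms(2)] by (intro edge_code_triple)
  show ?thesis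
    unfolding cycle_edge_list_def cycle_codes_def map_map comp_def
    by (rule map_cong[OF refl], rule edge_code_nth) simp
qed

definition cycles_K15 :: "nat list list" where
  "cycles_K15 = [[0,2,3,7,1,14,5,11,6],
    [2,1,10,13,0,12,5,9,8],
    [0,5,3,8,10,6,2,13,1],
    [1,0,8,10,7,5,6,4,11],
    [0,11,8,10,4,13,14,6,12],
    [1,9,4,8,14,13,3,12,0],
    [0,3,7,9,1,8,5,11,13],
    [0,2,11,6,12,1,13,5,8],
    [0,2,14,4,6,12,5,1,10],
    [0,2,13,14,9,4,12,1,7],
    [3,5,6,10,4,2,8,14,9],
    [5,4,13,1,3,0,8,12,11],
    [3,8,6,11,13,9,5,1,4],
    [4,3,11,13,10,8,9,7,14],
    [3,14,11,13,7,1,2,9,0],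
    [4,12,7,11,2,1,6,0,3],
    [3,6,10,12,4,11,8,14,1],
    [3,5,14,9,0,4,1,8,11],
    [3,5,2,7,9,0,8,4,13],
    [3,5,1,2,12,7,0,4,10],
    [6,8,9,13,7,5,11,2,12],
    [8,7,1,4,6,3,11,0,14],
    [6,11,9,14,1,12,8,4,7],
    [7,6,14,1,13,11,12,10,2],
    [6,2,14,1,10,4,5,12,3],
    [7,0,10,14,5,4,9,3,6],
    [6,9,13,0,7,14,11,2,4],
    [6,8,2,12,3,7,4,11,14],
    [6,8,5,10,12,3,11,7,1],
    [6,8,4,5,0,10,3,7,13],
    [9,11,12,1,10,8,14,5,0],
    [11,10,4,7,9,6,14,3,2],
    [9,14,12,2,4,0,11,7,10],
    [10,9,2,4,1,14,0,13,5],
    [9,5,2,4,13,7,8,0,6],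
    [10,3,13,2,8,7,12,6,9],
    [9,12,1,3,10,2,14,5,7],
    [9,11,5,0,6,10,7,14,2],
    [9,11,8,13,0,6,14,10,4],
    [9,11,7,8,3,13,6,10,1],
    [12,14,0,4,13,11,2,8,3],
    [14,13,7,10,12,9,2,6,5],
    [12,2,0,5,7,3,14,10,13],
    [13,12,5,7,4,2,3,1,8],
    [12,8,5,7,1,10,11,3,9],
    [13,6,1,5,11,10,0,9,12],
    [12,0,4,6,13,5,2,8,10],
    [12,14,8,3,9,13,10,2,5],
    [12,14,11,1,3,9,2,13,7],
    [12,14,10,11,6,1,9,13,4]]"

lemma cycles_K15_tight: "\<forall>c\<in>set cycles_K15. is_tight_cycle 9 c \<and> set c \<subseteq> {0..<15}"
  unfolding cycles_K15_def is_tight_cycle_def by simp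

lemma distinct_codes_K15:
  "distinct ([7, 56, 448, 3584, 28672] @ concat (map cycle_codes cycles_K15))"
  unfolding cycles_K15_def cycle_codes_def by (simp add: upt_rec)

lemma tight_cycle_decomposition_K15_standard_factor:
  "tight_cycle_decomposition 9 (complete3 {0..<15} - standard_factor 5) cycles_K15"
proof -
  define T :: "nat set list" where "T = map (\<lambda>i. {3 * i, 3 * i + 1, 3 * i + 2}) [0..<5]"
  define L where "L = concat (map cycle_edge_list cycles_K15)"
  have cycles: "distinct c" "length c = 9" "set c \<subseteq> {0..<15}" if "c \<in> set cycles_K15" for c
    using cycles_K15_tight that by (auto simp: is_tight_cycle_def)
  have "map edge_code (T @ L) = [7, 56, 448, 3584, 28672] @ concat (map cycle_codes cycles_K15)"
    using cycles edge_code_cycle_edge_list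
    by (simp add: T_def L_def edge_code_def map_concat upt_rec cong: map_cong)
  then have "distinct (T @ L)"
    using distinct_codes_K15 by (metis distinct_map)
  moreover have "e \<in> complete3 {0..<15}" if "c \<in> set cycles_K15" "e \<in> cycle_edges c" for c e
    using cycles[OF that(1)] that(2) by (intro cycle_edge_in_complete3) auto
  then have "set L \<subseteq> complete3 {0..<15}"
    by (auto simp: L_def set_cycle_edge_list)
  moreover have "set T \<subseteq> complete3 {0..<15}"
    by (simp add: T_def complete3_def upt_rec)
  moreover have "length (T @ L) = card {0..<15::nat} choose 3"
    by (simp add: T_def L_def cycles_K15_def numeral_eq_Suc)
  ultimately have "set T \<union> set L = complete3 {0..<15}" "set T \<inter> set L = {}"
    using set_eq_complete3_if_distinct[of "{0..<15}" "T @ L"] by simp_all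
  moreover have "set T = standard_factor 5"
    unfolding T_def standard_factor_def by (simp add: lessThan_atLeast0)
  ultimately have "set L = complete3 {0..<15} - standard_factor 5"
    by blast
  then show ?thesis
    using cycles_K15_tight \<open>distinct (T @ L)\<close>
    by (intro tight_cycle_decomposition_if_distinct_edges) (auto simp: L_def)
qed

theorem lemma13:
  fixes I :: "nat set set"
  assumes "one_factor {0..<15} I"
  shows "\<exists>D. length D = 50 \<and>
           tight_cycle_decomposition 9 (complete3 {0..<15} - I) D"
proof -
  obtain g where g: "bij_betw g {0..<15} {0..<15}" "image g ` standard_factor 5 = I"
    using one_factor_eq_image_standard_factor[of 5 I] assms by auto
  have "tight_cycle_decomposition 9 (image g ` (complete3 {0..<15} - standard_factor 5))
      (map (map g) cycles_K15)"
    using g(1) cycles_K15_tight tight_cycle_decomposition_K15_standard_factor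
    by (intro tight_cycle_decomposition_image[of g "{0..<15}"]) (auto simp: bij_betw_def)
  moreover have "standard_factor 5 \<subseteq> Pow {0..<15}"
    using Union_standard_factor[of 5] by auto
  ultimately have "tight_cycle_decomposition 9 (complete3 {0..<15} - I) (map (map g) cycles_K15)"
    using image_complete3_diff[OF g(1)] g(2) by simp
  moreover have "length (map (map g) cycles_K15) = 50"
    by (simp add: cycles_K15_def)
  ultimately show ?thesis
    by blast
qed

end
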